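(* For every positive integer $t$, $$B_0(1,2t+1)=p_{de}(2t),\qquad B_0(1,2t)=p_{de}(2t-1)+p_{do}(2t-1),$$ $$B_1(1,2t)=p_{de}(2t-1),\qquad B_1(1,2t+1)=p_{de}(2t)+p_{do}(2t).$$
   Context: For a partition $\pi$, $s(\pi)$ is its smallest part. $\mathrm{Spt}1_{do}(n)$ is the set of partitions $\pi$ of $n$ in which $s(\pi)$ occurs exactly once and the remaining parts are pairwise distinct and each has parity different from that of $s(\pi)$. $B_0(1,n)$ (resp. $B_1(1,n)$) is the number of $\pi\in\mathrm{Spt}1_{do}(n)$ whose number of parts greater than $s(\pi)$ is even (resp. odd). $p_{de}(n)$ (resp. $p_{do}(n)$) is the number of partitions of $n$ into distinct even (resp. distinct odd) parts, with value $1$ at $n=0$. *)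

theory Defs
  imports Main "HOL-Library.Multiset"
begin

definition partitions :: "nat \<Rightarrow> nat multiset set" where
  "partitions n = {P. (\<forall>x\<in>#P. 0 < x) \<and> sum_mset P = n}"

definition spart :: "nat multiset \<Rightarrow> nat" where
  "spart P = Min (set_mset P)"

definition Spt1_do :: "nat \<Rightarrow> nat multiset set" where
  "Spt1_do n = {P \<in> partitions n. P \<noteq> {#} \<and> count P (spart P) = 1 \<and>
      (\<forall>x\<in>#P. x \<noteq> spart P \<longrightarrow> count P x = 1 \<and> odd x \<noteq> odd (spart P))}"

definition nbig :: "nat multiset \<Rightarrow> nat" where
  "nbig P = size (filter_mset (\<lambda>x. spart P < x) P)"

definition B0 :: "nat \<Rightarrow> nat" where
  "B0 n = card {P \<in> Spt1_do n. even (nbig P)}"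

definition B1 :: "nat \<Rightarrow> nat" where
  "B1 n = card {P \<in> Spt1_do n. odd (nbig P)}"

definition p_de :: "nat \<Rightarrow> nat" where
  "p_de n = card {P \<in> partitions n. \<forall>x\<in>#P. even x \<and> count P x = 1}"

definition p_do :: "nat \<Rightarrow> nat" where
  "p_do n = card {P \<in> partitions n. \<forall>x\<in>#P. odd x \<and> count P x = 1}"

end

(*
  Write a partition in Spt1_do(n+1) as its smallest part s together with the set Q of larger
  parts, all of the parity opposite to s. The sum of Q is then even (s odd) or of the parity of
  |Q| (s even), so an even total forces both s and |Q| to be even, while for an odd total an even
  s forces |Q| to be odd. Lowering s by one maps the case s > 1 bijectively onto partitions of n
  into distinct parts of the parity of s - 1, and the case s = 1 is just Q, a partition of n into
  distinct even parts. Hence for odd s and a prescribed parity of |Q| every partition D of n into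
  distinct even parts arises exactly once: either as Q = D, or from D by raising its smallest part.
*)
theory Submission
  imports Defs
begin

lemma finite_partitions: "finite (partitions n)"
proof (rule finite_subset)
  show "partitions n \<subseteq> (\<Union>k\<le>n. multisets_of_size {1..n} k)"
  proof
    fix P assume "P \<in> partitions n"
    then have pos: "\<forall>x\<in>#P. 0 < x" and sum: "sum_mset P = n"
      unfolding partitions_def by auto
    have "size P \<le> sum_mset P"
      using pos by (induction P) auto
    moreover have "x \<le> sum_mset P" if "x \<in># P" for x
      using that by (induction P) auto
    ultimately show "P \<in> (\<Union>k\<le>n. multisets_of_size {1..n} k)"
      using pos sum by (auto simp: multisets_of_size_def)
  qed
qed (intro finite_UN_I finite_multisets_of_size; simp)

lemma spart_add_mset_min:
  assumes "\<forall>x\<in>#Q. s < x"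
  shows "spart (add_mset s Q) = s"
  unfolding spart_def using assms by (intro Min_eqI) auto

lemma nbig_add_mset_min:
  assumes "\<forall>x\<in>#Q. s < x"
  shows "nbig (add_mset s Q) = size Q"
proof -
  have "filter_mset (\<lambda>x. s < x) Q = Q"
    using assms by (simp add: filter_mset_eq_conv)
  then show ?thesis
    using assms by (simp add: nbig_def spart_add_mset_min)
qed

lemma spart_in:
  assumes "P \<noteq> {#}"
  shows "spart P \<in># P" and "\<forall>x\<in>#P. spart P \<le> x"
  using assms by (auto simp: spart_def)

lemma inj_on_add_mset_min: "inj_on (case_prod add_mset) {(s :: nat, Q). \<forall>x\<in>#Q. s < x}"
proof (rule inj_onI)
  fix sQ sQ' :: "nat \<times> nat multiset"
  assume "sQ \<in> {(s, Q). \<forall>x\<in>#Q. s < x}" "sQ' \<in> {(s, Q). \<forall>x\<in>#Q. s < x}"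
    and eq: "case_prod add_mset sQ = case_prod add_mset sQ'"
  moreover obtain s Q s' Q' where "sQ = (s, Q)" "sQ' = (s', Q')"
    by fastforce
  ultimately have min: "\<forall>x\<in>#Q. s < x" "\<forall>x\<in>#Q'. s' < x"
    and eq': "add_mset s Q = add_mset s' Q'"
    by auto
  have "s = s'"
    using spart_add_mset_min[OF min(1)] spart_add_mset_min[OF min(2)] eq' by simp
  with eq' show "sQ = sQ'"
    using \<open>sQ = (s, Q)\<close> \<open>sQ' = (s', Q')\<close> by simp
qed

text \<open>A pair \<open>(s, Q)\<close> encodes the partition \<open>add_mset s Q\<close> with smallest part \<open>s\<close> and
  distinct larger parts \<open>Q\<close>; \<open>C s x\<close> constrains the larger parts \<open>x\<close> relative to \<open>s\<close>.\<close>
definition min_splits :: "(nat \<Rightarrow> nat \<Rightarrow> bool) \<Rightarrow> nat \<Rightarrow> (nat \<times> nat multiset) set" where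
  "min_splits C n = {(s, Q). 0 < s \<and> s + sum_mset Q = n \<and>
      (\<forall>x\<in>#Q. s < x \<and> count Q x = 1 \<and> C s x)}"

abbreviation spt1_splits :: "nat \<Rightarrow> (nat \<times> nat multiset) set" where
  "spt1_splits \<equiv> min_splits (\<lambda>s x. odd x \<noteq> odd s)"

abbreviation same_parity_splits :: "nat \<Rightarrow> (nat \<times> nat multiset) set" where
  "same_parity_splits \<equiv> min_splits (\<lambda>s x. odd x = odd s)"

lemma min_splits_min: "(s, Q) \<in> min_splits C n \<Longrightarrow> \<forall>x\<in>#Q. s < x"
  by (simp add: min_splits_def)

lemma min_splits_subset: "min_splits C n \<subseteq> {(s, Q). \<forall>x\<in>#Q. s < x}"
  using min_splits_min by blast

lemma distinct_partitions_eq_min_splits: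
  "{P \<in> partitions n. P \<noteq> {#} \<and> (\<forall>x\<in>#P. count P x = 1 \<and> (x \<noteq> spart P \<longrightarrow> C (spart P) x))}
     = case_prod add_mset ` min_splits C n"
proof (intro equalityI subsetI)
  fix P
  assume "P \<in> {P \<in> partitions n. P \<noteq> {#} \<and>
    (\<forall>x\<in>#P. count P x = 1 \<and> (x \<noteq> spart P \<longrightarrow> C (spart P) x))}"
  then have P: "P \<in> partitions n" "P \<noteq> {#}"
    and parts: "\<forall>x\<in>#P. count P x = 1 \<and> (x \<noteq> spart P \<longrightarrow> C (spart P) x)" by auto
  define s where "s = spart P"
  define Q where "Q = P - {#s#}"
  have "s \<in># P" and s_min: "\<forall>x\<in>#P. s \<le> x"
    and parts_s: "\<forall>x\<in>#P. count P x = 1 \<and> (x \<noteq> s \<longrightarrow> C s x)"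
    using spart_in[OF P(2)] parts by (auto simp: s_def)
  then have P_eq: "P = add_mset s Q"
    by (simp add: Q_def)
  have "count P s = 1"
    using parts_s \<open>s \<in># P\<close> by blast
  then have "s \<notin># Q"
    using P_eq by (simp add: not_in_iff)
  have "s < x \<and> count Q x = 1 \<and> C s x" if "x \<in># Q" for x
  proof -
    have "x \<noteq> s" "x \<in># P"
      using that \<open>s \<notin># Q\<close> P_eq by auto
    then show ?thesis
      using parts_s s_min P_eq by (auto simp: order_less_le)
  qed
  moreover have "0 < s" "s + sum_mset Q = n"
    using P \<open>s \<in># P\<close> P_eq by (auto simp: partitions_def)
  ultimately have "(s, Q) \<in> min_splits C n"
    by (simp add: min_splits_def)
  then show "P \<in> case_prod add_mset ` min_splits C n"
    by (rule rev_image_eqI) (simp add: P_eq)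
next
  fix P assume "P \<in> case_prod add_mset ` min_splits C n"
  then obtain s Q where P_eq: "P = add_mset s Q" and sQ: "(s, Q) \<in> min_splits C n"
    by auto
  then have Q: "\<forall>x\<in>#Q. s < x \<and> count Q x = 1 \<and> C s x" "0 < s" "s + sum_mset Q = n"
    by (auto simp: min_splits_def)
  then have "spart P = s" "s \<notin># Q"
    using P_eq spart_add_mset_min by auto
  with Q show "P \<in> {P \<in> partitions n. P \<noteq> {#} \<and>
    (\<forall>x\<in>#P. count P x = 1 \<and> (x \<noteq> spart P \<longrightarrow> C (spart P) x))}"
    using P_eq by (auto simp: partitions_def not_in_iff)
qed

lemma finite_min_splits: "finite (min_splits C n)"
proof (rule finite_subset)
  show "min_splits C n \<subseteq> (\<lambda>P. (spart P, P - {#spart P#})) ` partitions n"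
  proof
    fix sQ assume "sQ \<in> min_splits C n"
    then obtain s Q where sQ: "sQ = (s, Q)" "0 < s" "s + sum_mset Q = n" "\<forall>x\<in>#Q. s < x"
      by (auto simp: min_splits_def)
    then have "add_mset s Q \<in> partitions n"
      by (auto simp: partitions_def)
    moreover have "sQ = (spart (add_mset s Q), add_mset s Q - {#spart (add_mset s Q)#})"
      using sQ by (simp add: spart_add_mset_min)
    ultimately show "sQ \<in> (\<lambda>P. (spart P, P - {#spart P#})) ` partitions n"
      by (rule rev_image_eqI)
  qed
qed (intro finite_imageI finite_partitions)

lemma card_image_add_mset_min:
  fixes S :: "(nat \<times> nat multiset) set"
  assumes "S \<subseteq> {(s, Q). \<forall>x\<in>#Q. s < x}"
  shows "card {P \<in> case_prod add_mset ` S. R P} = card {(s, Q) \<in> S. R (add_mset s Q)}"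
proof -
  have "{P \<in> case_prod add_mset ` S. R P} = case_prod add_mset ` {(s, Q) \<in> S. R (add_mset s Q)}"
    by auto
  moreover have "inj_on (case_prod add_mset) {(s, Q) \<in> S. R (add_mset s Q)}"
    by (rule inj_on_subset[OF inj_on_add_mset_min]) (use assms in auto)
  ultimately show ?thesis
    by (simp add: card_image)
qed

lemma Spt1_do_eq_min_splits: "Spt1_do n = case_prod add_mset ` spt1_splits n"
proof -
  have "Spt1_do n = {P \<in> partitions n. P \<noteq> {#} \<and>
      (\<forall>x\<in>#P. count P x = 1 \<and> (x \<noteq> spart P \<longrightarrow> odd x \<noteq> odd (spart P)))}"
    unfolding Spt1_do_def using spart_in(1) by fastforce
  also have "\<dots> = case_prod add_mset ` spt1_splits n"
    by (rule distinct_partitions_eq_min_splits)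
  finally show ?thesis .
qed

lemma card_Spt1_do_nbig:
  "card {P \<in> Spt1_do n. R (nbig P)} = card {(s, Q) \<in> spt1_splits n. R (size Q)}"
proof -
  have "card {P \<in> Spt1_do n. R (nbig P)} = card {(s, Q) \<in> spt1_splits n. R (nbig (add_mset s Q))}"
    unfolding Spt1_do_eq_min_splits by (rule card_image_add_mset_min[OF min_splits_subset])
  also have "\<dots> = card {(s, Q) \<in> spt1_splits n. R (size Q)}"
    using nbig_add_mset_min[OF min_splits_min] by (intro arg_cong[where f = card]) auto
  finally show ?thesis .
qed

lemma card_distinct_parity_partitions:
  assumes "0 < n"
  shows "card {D \<in> partitions n. (\<forall>x\<in>#D. (even x \<longleftrightarrow> b) \<and> count D x = 1) \<and> R (size D)}
    = card {(m, Q) \<in> same_parity_splits n. (even m \<longleftrightarrow> b) \<and> R (Suc (size Q))}"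
proof -
  have parts_iff: "(\<forall>x\<in>#D. (even x \<longleftrightarrow> b) \<and> count D x = 1) \<longleftrightarrow>
      D \<noteq> {#} \<and> (\<forall>x\<in>#D. count D x = 1 \<and> (x \<noteq> spart D \<longrightarrow> odd x = odd (spart D)))
      \<and> (even (spart D) \<longleftrightarrow> b)" if "D \<in> partitions n" for D
  proof -
    have "D \<noteq> {#}"
      using that assms by (auto simp: partitions_def)
    then have "spart D \<in># D"
      by (rule spart_in)
    then have "(\<forall>x\<in>#D. (even x \<longleftrightarrow> b) \<and> count D x = 1) \<longleftrightarrow>
        (\<forall>x\<in>#D. count D x = 1 \<and> (x \<noteq> spart D \<longrightarrow> odd x = odd (spart D)))
        \<and> (even (spart D) \<longleftrightarrow> b)"
      by metis
    with \<open>D \<noteq> {#}\<close> show ?thesis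
      by blast
  qed
  have "{D \<in> partitions n. (\<forall>x\<in>#D. (even x \<longleftrightarrow> b) \<and> count D x = 1) \<and> R (size D)}
    = {P \<in> case_prod add_mset ` same_parity_splits n. (even (spart P) \<longleftrightarrow> b) \<and> R (size P)}"
    unfolding distinct_partitions_eq_min_splits[symmetric]
  proof (rule Collect_cong)
    fix D
    show "D \<in> partitions n \<and> (\<forall>x\<in>#D. (even x \<longleftrightarrow> b) \<and> count D x = 1) \<and> R (size D) \<longleftrightarrow>
      D \<in> {P \<in> partitions n. P \<noteq> {#} \<and>
        (\<forall>x\<in>#P. count P x = 1 \<and> (x \<noteq> spart P \<longrightarrow> odd x = odd (spart P)))} \<and>
      (even (spart D) \<longleftrightarrow> b) \<and> R (size D)"
      using parts_iff[of D] by auto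
  qed
  also have "card \<dots> = card {(m, Q) \<in> same_parity_splits n.
      (even (spart (add_mset m Q)) \<longleftrightarrow> b) \<and> R (size (add_mset m Q))}"
    by (rule card_image_add_mset_min[OF min_splits_subset])
  also have "\<dots> = card {(m, Q) \<in> same_parity_splits n. (even m \<longleftrightarrow> b) \<and> R (Suc (size Q))}"
    using spart_add_mset_min[OF min_splits_min] by (intro arg_cong[where f = card]) auto
  finally show ?thesis .
qed

lemma even_sum_mset_even: "\<forall>x\<in>#Q. even x \<Longrightarrow> even (sum_mset (Q :: nat multiset))"
  by (induction Q) auto

lemma even_sum_mset_odd: "\<forall>x\<in>#Q. odd x \<Longrightarrow> even (sum_mset (Q :: nat multiset)) \<longleftrightarrow> even (size Q)"
  by (induction Q) auto

lemma spt1_splits_odd_min: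
  assumes "(s, Q) \<in> spt1_splits n" "odd s"
  shows "odd n"
proof -
  have parts: "\<forall>x\<in>#Q. odd x \<noteq> odd s" and sum: "s + sum_mset Q = n"
    using assms(1) by (simp_all add: min_splits_def)
  have "\<forall>x\<in>#Q. even x"
    using parts assms(2) by blast
  then have "even (sum_mset Q)"
    by (rule even_sum_mset_even)
  with sum assms(2) show ?thesis
    by auto
qed

lemma spt1_splits_even_min:
  assumes "(s, Q) \<in> spt1_splits n" "even s"
  shows "even n \<longleftrightarrow> even (size Q)"
proof -
  have parts: "\<forall>x\<in>#Q. odd x \<noteq> odd s" and sum: "s + sum_mset Q = n"
    using assms(1) by (simp_all add: min_splits_def)
  have "\<forall>x\<in>#Q. odd x"
    using parts assms(2) by blast
  then have "even (sum_mset Q) \<longleftrightarrow> even (size Q)"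
    by (rule even_sum_mset_odd)
  with sum assms(2) show ?thesis
    by auto
qed

lemma card_spt1_splits_Suc_min_ne1:
  "card {(s, Q) \<in> spt1_splits (Suc n). s \<noteq> 1 \<and> R s Q}
    = card {(m, Q) \<in> same_parity_splits n. R (Suc m) Q}"
proof -
  have "{(s, Q) \<in> spt1_splits (Suc n). s \<noteq> 1 \<and> R s Q}
      = apfst Suc ` {(m, Q) \<in> same_parity_splits n. R (Suc m) Q}"
  proof (intro equalityI subsetI)
    fix sQ assume "sQ \<in> {(s, Q) \<in> spt1_splits (Suc n). s \<noteq> 1 \<and> R s Q}"
    then obtain s Q where sQ: "sQ = (s, Q)" "0 < s" "s \<noteq> 1" "R s Q" "s + sum_mset Q = Suc n"
      and Q: "\<forall>x\<in>#Q. s < x \<and> count Q x = 1 \<and> odd x \<noteq> odd s"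
      by (auto simp: min_splits_def)
    then obtain m where "s = Suc m" "0 < m"
      by (cases s) auto
    with sQ Q have "(m, Q) \<in> {(m, Q) \<in> same_parity_splits n. R (Suc m) Q}"
      by (auto simp: min_splits_def)
    then show "sQ \<in> apfst Suc ` {(m, Q) \<in> same_parity_splits n. R (Suc m) Q}"
      by (rule rev_image_eqI) (simp add: sQ \<open>s = Suc m\<close>)
  next
    fix sQ assume "sQ \<in> apfst Suc ` {(m, Q) \<in> same_parity_splits n. R (Suc m) Q}"
    then obtain m Q where sQ: "sQ = (Suc m, Q)" "R (Suc m) Q" "0 < m" "m + sum_mset Q = n"
      and Q: "\<forall>x\<in>#Q. m < x \<and> count Q x = 1 \<and> odd x = odd m"
      by (auto simp: min_splits_def)
    have "Suc m < x" if "x \<in># Q" for x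
      using Q that by (metis Suc_lessI even_Suc)
    with sQ Q show "sQ \<in> {(s, Q) \<in> spt1_splits (Suc n). s \<noteq> 1 \<and> R s Q}"
      by (auto simp: min_splits_def)
  qed
  then show ?thesis
    by (simp add: card_image inj_on_subset[of "apfst Suc" UNIV])
qed

lemma card_spt1_splits_Suc_min_1:
  "card {(s, Q) \<in> spt1_splits (Suc n). s = 1 \<and> R Q}
    = card {D \<in> partitions n. (\<forall>x\<in>#D. even x \<and> count D x = 1) \<and> R D}"
proof -
  have "{(s, Q) \<in> spt1_splits (Suc n). s = 1 \<and> R Q}
      = Pair 1 ` {D \<in> partitions n. (\<forall>x\<in>#D. even x \<and> count D x = 1) \<and> R D}"
  proof (intro equalityI subsetI)
    fix sQ assume "sQ \<in> {(s, Q) \<in> spt1_splits (Suc n). s = 1 \<and> R Q}"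
    then obtain Q where "sQ = (1, Q)" "R Q" "sum_mset Q = n"
      and "\<forall>x\<in>#Q. 1 < x \<and> count Q x = 1 \<and> even x"
      by (auto simp: min_splits_def)
    then have "Q \<in> {D \<in> partitions n. (\<forall>x\<in>#D. even x \<and> count D x = 1) \<and> R D}"
      by (auto simp: partitions_def)
    then show "sQ \<in> Pair 1 ` {D \<in> partitions n. (\<forall>x\<in>#D. even x \<and> count D x = 1) \<and> R D}"
      by (rule rev_image_eqI) (simp add: \<open>sQ = (1, Q)\<close>)
  next
    fix sQ :: "nat \<times> nat multiset"
    assume "sQ \<in> Pair 1 ` {D \<in> partitions n. (\<forall>x\<in>#D. even x \<and> count D x = 1) \<and> R D}"
    then obtain D where "sQ = (1, D)" "R D" "sum_mset D = n"
      and D: "\<forall>x\<in>#D. 0 < x \<and> even x \<and> count D x = 1"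
      by (auto simp: partitions_def)
    moreover have "1 < x" if "x \<in># D" for x
    proof -
      have "0 < x" "even x"
        using D that by auto
      then show ?thesis
        by (cases x) (auto simp: odd_pos)
    qed
    ultimately show "sQ \<in> {(s, Q) \<in> spt1_splits (Suc n). s = 1 \<and> R Q}"
      by (auto simp: min_splits_def)
  qed
  then show ?thesis
    by (simp add: card_image inj_on_def)
qed

lemma card_spt1_splits_Suc_even_min:
  assumes "0 < n"
  shows "card {(s, Q) \<in> spt1_splits (Suc n). even s} = p_do n"
proof -
  have "{(s, Q) \<in> spt1_splits (Suc n). even s} = {(s, Q) \<in> spt1_splits (Suc n). s \<noteq> 1 \<and> even s}"
    by auto
  also have "card \<dots> = card {(m, Q) \<in> same_parity_splits n. even (Suc m)}"
    by (rule card_spt1_splits_Suc_min_ne1)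
  also have "\<dots> = card {D \<in> partitions n. (\<forall>x\<in>#D. (even x \<longleftrightarrow> False) \<and> count D x = 1) \<and> True}"
    using card_distinct_parity_partitions[OF assms, of False "\<lambda>_. True"] by simp
  also have "\<dots> = p_do n"
    by (simp add: p_do_def)
  finally show ?thesis .
qed

lemma card_distinct_even_partitions_by_size:
  "card {D \<in> partitions n. (\<forall>x\<in>#D. even x \<and> count D x = 1) \<and> (even (size D) \<longleftrightarrow> b)}
    + card {D \<in> partitions n. (\<forall>x\<in>#D. even x \<and> count D x = 1) \<and> (odd (size D) \<longleftrightarrow> b)}
    = p_de n" (is "card ?A + card ?B = _")
proof -
  have "p_de n = card (?A \<union> ?B)"
    unfolding p_de_def by (rule arg_cong[where f = card]) auto
  also have "\<dots> = card ?A + card ?B"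
    by (rule card_Un_disjoint) (auto intro: finite_subset[OF _ finite_partitions])
  finally show ?thesis ..
qed

lemma card_spt1_splits_Suc_odd_min:
  assumes "0 < n"
  shows "card {(s, Q) \<in> spt1_splits (Suc n). odd s \<and> (even (size Q) \<longleftrightarrow> b)} = p_de n"
    (is "card ?S = _")
proof -
  let ?S1 = "{(s, Q) \<in> spt1_splits (Suc n). s = 1 \<and> (even (size Q) \<longleftrightarrow> b)}"
  let ?S2 = "{(s, Q) \<in> spt1_splits (Suc n). s \<noteq> 1 \<and> odd s \<and> (even (size Q) \<longleftrightarrow> b)}"
  have "card ?S = card (?S1 \<union> ?S2)"
    by (rule arg_cong[where f = card]) auto
  also have "\<dots> = card ?S1 + card ?S2"
    by (rule card_Un_disjoint) (auto intro: finite_subset[OF _ finite_min_splits])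
  finally have "card ?S = card ?S1 + card ?S2" .
  moreover have "card ?S1
      = card {D \<in> partitions n. (\<forall>x\<in>#D. even x \<and> count D x = 1) \<and> (even (size D) \<longleftrightarrow> b)}"
    by (rule card_spt1_splits_Suc_min_1)
  moreover have "card ?S2 = card {(m, Q) \<in> same_parity_splits n. odd (Suc m) \<and> (even (size Q) \<longleftrightarrow> b)}"
    by (rule card_spt1_splits_Suc_min_ne1)
  moreover have "\<dots> = card {D \<in> partitions n. (\<forall>x\<in>#D. even x \<and> count D x = 1) \<and> (odd (size D) \<longleftrightarrow> b)}"
    using card_distinct_parity_partitions[OF assms, of True "\<lambda>k. odd k \<longleftrightarrow> b"] by simp
  ultimately show ?thesis
    using card_distinct_even_partitions_by_size[of n b] by simp
qed

lemma p_de_odd: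
  assumes "odd n"
  shows "p_de n = 0"
proof -
  have "{P \<in> partitions n. \<forall>x\<in>#P. even x \<and> count P x = 1} = {}"
  proof (rule equals0I)
    fix P assume "P \<in> {P \<in> partitions n. \<forall>x\<in>#P. even x \<and> count P x = 1}"
    then have "\<forall>x\<in>#P. even x" and "sum_mset P = n"
      by (auto simp: partitions_def)
    then show False
      using even_sum_mset_even assms by blast
  qed
  then show ?thesis
    unfolding p_de_def by (metis card.empty)
qed

lemma B_Suc_odd:
  assumes "odd n"
  shows "B0 (Suc n) = p_do n" and "B1 (Suc n) = 0"
proof -
  have even_min: "even s" if "(s, Q) \<in> spt1_splits (Suc n)" for s Q
    using spt1_splits_odd_min[OF that] assms by auto
  have even_size: "even (size Q)" if "(s, Q) \<in> spt1_splits (Suc n)" for s Q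
    using spt1_splits_even_min[OF that even_min[OF that]] assms by simp
  have "B0 (Suc n) = card {(s, Q) \<in> spt1_splits (Suc n). even (size Q)}"
    unfolding B0_def by (rule card_Spt1_do_nbig)
  also have "\<dots> = card {(s, Q) \<in> spt1_splits (Suc n). even s}"
    by (rule arg_cong[where f = card]) (use even_min even_size in blast)
  also have "\<dots> = p_do n"
    using assms by (intro card_spt1_splits_Suc_even_min) (simp add: odd_pos)
  finally show "B0 (Suc n) = p_do n" .
  have B1_eq: "B1 (Suc n) = card {(s, Q) \<in> spt1_splits (Suc n). odd (size Q)}"
    unfolding B1_def by (rule card_Spt1_do_nbig)
  have no_odd: "{(s, Q) \<in> spt1_splits (Suc n). odd (size Q)} = {}"
    using even_size by blast
  show "B1 (Suc n) = 0"
    unfolding B1_eq no_odd by simp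
qed

lemma B_Suc_even:
  assumes "even n" "0 < n"
  shows "B0 (Suc n) = p_de n" and "B1 (Suc n) = p_de n + p_do n"
proof -
  have odd_size: "odd (size Q)" if "(s, Q) \<in> spt1_splits (Suc n)" "even s" for s Q
    using spt1_splits_even_min[OF that] assms(1) by simp
  have "B0 (Suc n) = card {(s, Q) \<in> spt1_splits (Suc n). even (size Q)}"
    unfolding B0_def by (rule card_Spt1_do_nbig)
  also have "\<dots> = card {(s, Q) \<in> spt1_splits (Suc n). odd s \<and> (even (size Q) \<longleftrightarrow> True)}"
    using odd_size by (intro arg_cong[where f = card]) auto
  also have "\<dots> = p_de n"
    by (rule card_spt1_splits_Suc_odd_min[OF assms(2)])
  finally show "B0 (Suc n) = p_de n" .
  let ?S_odd = "{(s, Q) \<in> spt1_splits (Suc n). odd s \<and> (even (size Q) \<longleftrightarrow> False)}"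
  let ?S_even = "{(s, Q) \<in> spt1_splits (Suc n). even s}"
  have "B1 (Suc n) = card {(s, Q) \<in> spt1_splits (Suc n). odd (size Q)}"
    unfolding B1_def by (rule card_Spt1_do_nbig)
  also have "\<dots> = card (?S_odd \<union> ?S_even)"
    using odd_size by (intro arg_cong[where f = card]) auto
  also have "\<dots> = card ?S_odd + card ?S_even"
    by (rule card_Un_disjoint) (auto intro: finite_subset[OF _ finite_min_splits])
  also have "\<dots> = p_de n + p_do n"
    by (simp only: card_spt1_splits_Suc_odd_min[OF assms(2)] card_spt1_splits_Suc_even_min[OF assms(2)])
  finally show "B1 (Suc n) = p_de n + p_do n" .
qed

theorem lemma5:
  fixes t :: nat
  assumes "0 < t"
  shows "B0 (2*t+1) = p_de (2*t) \<and>
         B0 (2*t) = p_de (2*t-1) + p_do (2*t-1) \<and>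
         B1 (2*t) = p_de (2*t-1) \<and>
         B1 (2*t+1) = p_de (2*t) + p_do (2*t)"
proof -
  have "2*t = Suc (2*t - 1)" "odd (2*t - 1)"
    using assms by auto
  then have "B0 (2*t) = p_do (2*t - 1)" "B1 (2*t) = 0" "p_de (2*t - 1) = 0"
    using B_Suc_odd p_de_odd by metis+
  moreover have "B0 (2*t+1) = p_de (2*t)" "B1 (2*t+1) = p_de (2*t) + p_do (2*t)"
    using B_Suc_even[of "2*t"] assms by simp_all
  ultimately show ?thesis
    by simp
qed

end
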